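(* Let $\gamma(s)$ be a non-geodesic arc-length parametrized Frenet curve with Frenet frame $\{T,N,B\}$, constant curvature $k_1>0$ and zero torsion $k_2=0$ in a $3$-dimensional $f$-Kenmotsu manifold $(M,\varphi,\xi,\eta,g)$, and suppose $\eta(B)=0$. Then $\gamma$ is a proper triharmonic curve if and only if $$k_1=\sqrt{2\Big(\frac r2+2(f^2+f')-\big(\frac r2+3(f^2+f')\big)(\eta(T)^2+\eta(N)^2)\Big)}.$$
   Context: An almost contact metric manifold $(M^{2n+1},\varphi,\xi,\eta,g)$ has $\varphi^2=-I+\eta\otimes\xi$, $\eta(\xi)=1$, $\varphi\xi=0$, $\eta\circ\varphi=0$, $\eta(X)=g(X,\xi)$, $g(\varphi X,\varphi Y)=g(X,Y)-\eta(X)\eta(Y)$. It is $f$-Kenmotsu if $(\nabla_X\varphi)Y=f(g(\varphi X,Y)\xi-\eta(Y)\varphi X)$ and $\nabla_X\xi=f(X-\eta(X)\xi)$ for smooth $f$ with $df\wedge\eta=0$. In dimension 3 the curvature is $R(X,Y)Z=(\frac r2+2(f^2+f'))(g(Y,Z)X-g(X,Z)Y)-(\frac r2+3(f^2+f'))(g(Y,Z)\eta(X)\xi-g(X,Z)\eta(Y)\xi-\eta(X)\eta(Z)Y+\eta(Y)\eta(Z)X)$, with $r$ the scalar curvature and $f'$ the derivative of $f$ (regarded along the curve). Frenet equations: $\nabla_TT=k_1N$, $\nabla_TN=-k_1T+k_2B$, $\nabla_TB=-k_2N$. A curve is triharmonic if $\tau_3(\gamma)=\nabla_T^5T+R(\nabla_T^3T,T)T-R(\nabla_T^2T,\nabla_TT)T=0$,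 and proper triharmonic if triharmonic but not a geodesic. *)

theory Defs
  imports "HOL-Analysis.Analysis"
begin

(* Model: everything is expressed along the curve.  Vector fields along gamma are
   written in a parallel orthonormal frame, so they are maps  real => real^3,
   the metric g is the Euclidean inner product, and the covariant derivative
   nabla_T along gamma is the ordinary derivative. *)

type_synonym vec3 = "real^3"

fun cov_iter :: "nat \<Rightarrow> (real \<Rightarrow> vec3) \<Rightarrow> real \<Rightarrow> vec3" where
  "cov_iter 0 V = V"
| "cov_iter (Suc n) V = (\<lambda>s. vector_derivative (cov_iter n V) (at s))"

text \<open>Curvature tensor of a 3-dimensional f-Kenmotsu manifold at gamma(s),
  as given in the context (r = scalar curvature, fd = f').\<close>
definition fK3_R ::
  "(real \<Rightarrow> real) \<Rightarrow> (real \<Rightarrow> real) \<Rightarrow> (real \<Rightarrow> real) \<Rightarrow> (real \<Rightarrow> vec3)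
   \<Rightarrow> real \<Rightarrow> vec3 \<Rightarrow> vec3 \<Rightarrow> vec3 \<Rightarrow> vec3" where
  "fK3_R r f fd xi s X Y Z =
     (r s / 2 + 2 * ((f s)\<^sup>2 + fd s)) *\<^sub>R ((Y \<bullet> Z) *\<^sub>R X - (X \<bullet> Z) *\<^sub>R Y)
   - (r s / 2 + 3 * ((f s)\<^sup>2 + fd s)) *\<^sub>R
       (((Y \<bullet> Z) * (xi s \<bullet> X)) *\<^sub>R xi s - ((X \<bullet> Z) * (xi s \<bullet> Y)) *\<^sub>R xi s
        - ((xi s \<bullet> X) * (xi s \<bullet> Z)) *\<^sub>R Y + ((xi s \<bullet> Y) * (xi s \<bullet> Z)) *\<^sub>R X)"

definition fKenmotsu_along ::
  "real set \<Rightarrow> (real \<Rightarrow> vec3 \<Rightarrow> vec3) \<Rightarrow> (real \<Rightarrow> vec3) \<Rightarrow> (real \<Rightarrow> real)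
   \<Rightarrow> (real \<Rightarrow> real) \<Rightarrow> (real \<Rightarrow> vec3) \<Rightarrow> bool" where
  "fKenmotsu_along I phi xi f fd T \<longleftrightarrow>
     (\<forall>s\<in>I.
        linear (phi s)
      \<and> xi s \<bullet> xi s = 1
      \<and> phi s (xi s) = 0
      \<and> (\<forall>X. phi s (phi s X) = - X + (xi s \<bullet> X) *\<^sub>R xi s)
      \<and> (\<forall>X. xi s \<bullet> phi s X = 0)
      \<and> (\<forall>X Y. phi s X \<bullet> phi s Y = X \<bullet> Y - (xi s \<bullet> X) * (xi s \<bullet> Y))
      \<and> (xi has_vector_derivative (f s *\<^sub>R (T s - (xi s \<bullet> T s) *\<^sub>R xi s))) (at s)
      \<and> (\<forall>Y. ((\<lambda>t. phi t Y) has_vector_derivative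
               (f s *\<^sub>R ((phi s (T s) \<bullet> Y) *\<^sub>R xi s - (xi s \<bullet> Y) *\<^sub>R phi s (T s)))) (at s))
      \<and> (f has_real_derivative fd s) (at s))"

definition frenet3 ::
  "real set \<Rightarrow> (real \<Rightarrow> vec3) \<Rightarrow> (real \<Rightarrow> vec3) \<Rightarrow> (real \<Rightarrow> vec3)
   \<Rightarrow> (real \<Rightarrow> real) \<Rightarrow> (real \<Rightarrow> real) \<Rightarrow> bool" where
  "frenet3 I T N B k1 k2 \<longleftrightarrow>
     (\<forall>s\<in>I.
        T s \<bullet> T s = 1 \<and> N s \<bullet> N s = 1 \<and> B s \<bullet> B s = 1
      \<and> T s \<bullet> N s = 0 \<and> T s \<bullet> B s = 0 \<and> N s \<bullet> B s = 0
      \<and> (T has_vector_derivative (k1 s *\<^sub>R N s)) (at s)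
      \<and> (N has_vector_derivative (- k1 s *\<^sub>R T s + k2 s *\<^sub>R B s)) (at s)
      \<and> (B has_vector_derivative (- k2 s *\<^sub>R N s)) (at s))"

definition geodesic_along :: "real set \<Rightarrow> (real \<Rightarrow> vec3) \<Rightarrow> bool" where
  "geodesic_along I T \<longleftrightarrow> (\<forall>s\<in>I. cov_iter 1 T s = 0)"

definition triharmonic ::
  "real set \<Rightarrow> (real \<Rightarrow> vec3 \<Rightarrow> vec3 \<Rightarrow> vec3 \<Rightarrow> vec3) \<Rightarrow> (real \<Rightarrow> vec3) \<Rightarrow> bool" where
  "triharmonic I R T \<longleftrightarrow>
     (\<forall>s\<in>I. cov_iter 5 T s + R s (cov_iter 3 T s) (T s) (T s)
                 - R s (cov_iter 2 T s) (cov_iter 1 T s) (T s) = 0)"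

definition proper_triharmonic ::
  "real set \<Rightarrow> (real \<Rightarrow> vec3 \<Rightarrow> vec3 \<Rightarrow> vec3 \<Rightarrow> vec3) \<Rightarrow> (real \<Rightarrow> vec3) \<Rightarrow> bool" where
  "proper_triharmonic I R T \<longleftrightarrow> triharmonic I R T \<and> \<not> geodesic_along I T"

end

theory Submission
  imports Defs
begin

(* For a unit-speed curve with constant curvature k and zero torsion the Frenet equations give
   nabla_T T = k N, nabla_T^2 T = -k^2 T, nabla_T^3 T = -k^3 N and nabla_T^5 T = k^5 N.
   Since eta(B) = 0, xi lies in the osculating plane span{T, N}, and there the curvature tensor
   acts by R(N, T) T = K N, where K is the sectional curvature of that plane, namely
   r/2 + 2(f^2 + f') - (r/2 + 3(f^2 + f'))(eta(T)^2 + eta(N)^2).  By antisymmetry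
   tau_3 = k^5 N - k^3 K N - k^3 K N = k^3 (k^2 - 2K) N, which vanishes iff k^2 = 2K;
   and k > 0 rules out geodesics. *)

lemma orthogonal_orthonormal_triple_eq_0:
  fixes T N B w :: "'a::euclidean_space"
  assumes "DIM('a) = 3"
    and "T \<bullet> T = 1" "N \<bullet> N = 1" "B \<bullet> B = 1" "T \<bullet> N = 0" "T \<bullet> B = 0" "N \<bullet> B = 0"
    and "w \<bullet> T = 0" "w \<bullet> N = 0" "w \<bullet> B = 0"
  shows "w = 0"
proof (rule ccontr)
  assume "w \<noteq> 0"
  with assms have "T \<noteq> N" "T \<noteq> B" "N \<noteq> B" "w \<noteq> T" "w \<noteq> N" "w \<noteq> B"
    by (auto simp: inner_commute)
  then have distinct: "card {T, N, B, w} = 4"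
    by auto
  have "pairwise orthogonal {T, N, B, w}"
    using assms by (auto simp: pairwise_def orthogonal_def inner_commute)
  moreover have "0 \<notin> {T, N, B, w}"
    using assms \<open>w \<noteq> 0\<close> by auto
  ultimately have "independent {T, N, B, w}"
    by (rule pairwise_orthogonal_independent)
  then have "card {T, N, B, w} \<le> DIM('a)"
    using independent_bound by blast
  with distinct assms(1) show False by simp
qed

lemma orthonormal_triple_expansion:
  fixes T N B w :: "'a::euclidean_space"
  assumes "DIM('a) = 3"
    and "T \<bullet> T = 1" "N \<bullet> N = 1" "B \<bullet> B = 1" "T \<bullet> N = 0" "T \<bullet> B = 0" "N \<bullet> B = 0"
  shows "w = (w \<bullet> T) *\<^sub>R T + (w \<bullet> N) *\<^sub>R N + (w \<bullet> B) *\<^sub>R B"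
proof -
  have "N \<bullet> T = 0" "B \<bullet> T = 0" "B \<bullet> N = 0"
    using assms by (simp_all add: inner_commute)
  then have "w - (w \<bullet> T) *\<^sub>R T - (w \<bullet> N) *\<^sub>R N - (w \<bullet> B) *\<^sub>R B = 0"
    by (intro orthogonal_orthonormal_triple_eq_0[OF assms]) (simp_all add: assms inner_diff_left)
  then show ?thesis by (simp add: algebra_simps)
qed

lemma vector_derivative_eq_on_open:
  assumes "(G has_vector_derivative D) (at s)"
    and "open I" "s \<in> I" "\<And>t. t \<in> I \<Longrightarrow> F t = G t"
  shows "vector_derivative F (at s) = D"
  using has_vector_derivative_transform_within_open[OF assms(1-3)] assms(4)
  by (auto intro: vector_derivative_at)

lemma cov_iter_constant_curvature:
  fixes T N :: "real \<Rightarrow> vec3"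
  assumes "open I"
    and T': "\<And>s. s \<in> I \<Longrightarrow> (T has_vector_derivative k *\<^sub>R N s) (at s)"
    and N': "\<And>s. s \<in> I \<Longrightarrow> (N has_vector_derivative - k *\<^sub>R T s) (at s)"
  shows "\<forall>s\<in>I. cov_iter (2 * n) T s = (-(k\<^sup>2)) ^ n *\<^sub>R T s
             \<and> cov_iter (2 * n + 1) T s = (k * (-(k\<^sup>2)) ^ n) *\<^sub>R N s"
proof (induction n)
  case 0
  show ?case
    using vector_derivative_eq_on_open[OF T' \<open>open I\<close>] by simp
next
  case (Suc n)
  have even: "cov_iter (2 * Suc n) T s = (-(k\<^sup>2)) ^ Suc n *\<^sub>R T s" if "s \<in> I" for s
  proof -
    have "((\<lambda>t. (k * (-(k\<^sup>2)) ^ n) *\<^sub>R N t) has_vector_derivative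
            (-(k\<^sup>2)) ^ Suc n *\<^sub>R T s) (at s)"
      using has_vector_derivative_scaleR[OF DERIV_const[of "k * (-(k\<^sup>2)) ^ n"] N'[OF that]]
      by (simp add: power2_eq_square mult_ac)
    then have "vector_derivative (cov_iter (2 * n + 1) T) (at s) = (-(k\<^sup>2)) ^ Suc n *\<^sub>R T s"
      by (rule vector_derivative_eq_on_open[OF _ \<open>open I\<close> that]) (use Suc.IH in auto)
    then show ?thesis by simp
  qed
  have "cov_iter (2 * Suc n + 1) T s = (k * (-(k\<^sup>2)) ^ Suc n) *\<^sub>R N s" if "s \<in> I" for s
  proof -
    have "((\<lambda>t. (-(k\<^sup>2)) ^ Suc n *\<^sub>R T t) has_vector_derivative
            (k * (-(k\<^sup>2)) ^ Suc n) *\<^sub>R N s) (at s)"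
      using has_vector_derivative_scaleR[OF DERIV_const[of "(-(k\<^sup>2)) ^ Suc n"] T'[OF that]]
      by (simp add: mult_ac)
    then have "vector_derivative (cov_iter (2 * Suc n) T) (at s) = (k * (-(k\<^sup>2)) ^ Suc n) *\<^sub>R N s"
      by (rule vector_derivative_eq_on_open[OF _ \<open>open I\<close> that]) (use even in auto)
    then show ?thesis by simp
  qed
  with even show ?case by blast
qed

definition fK3_sectional ::
  "(real \<Rightarrow> real) \<Rightarrow> (real \<Rightarrow> real) \<Rightarrow> (real \<Rightarrow> real) \<Rightarrow> (real \<Rightarrow> vec3)
   \<Rightarrow> real \<Rightarrow> vec3 \<Rightarrow> vec3 \<Rightarrow> real" where
  "fK3_sectional r f fd xi s X Y =
     r s / 2 + 2 * ((f s)\<^sup>2 + fd s)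
   - (r s / 2 + 3 * ((f s)\<^sup>2 + fd s)) * ((xi s \<bullet> X)\<^sup>2 + (xi s \<bullet> Y)\<^sup>2)"

lemma fK3_R_swap: "fK3_R r f fd xi s V U W = - fK3_R r f fd xi s U V W"
  by (simp add: fK3_R_def algebra_simps)

lemma fK3_R_scaleR_left: "fK3_R r f fd xi s (a *\<^sub>R U) V W = a *\<^sub>R fK3_R r f fd xi s U V W"
  by (simp add: fK3_R_def algebra_simps)

lemma fK3_R_scaleR_middle: "fK3_R r f fd xi s U (a *\<^sub>R V) W = a *\<^sub>R fK3_R r f fd xi s U V W"
  by (simp add: fK3_R_def algebra_simps)

lemma fK3_R_orthonormal_plane:
  assumes "T \<bullet> T = 1" "N \<bullet> N = 1" "T \<bullet> N = 0"
    and xi: "xi s = x *\<^sub>R T + y *\<^sub>R N"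
  shows "fK3_R r f fd xi s N T T = fK3_sectional r f fd xi s T N *\<^sub>R N"
proof -
  have "N \<bullet> T = 0" using assms by (simp add: inner_commute)
  with assms(1-3) have "xi s \<bullet> T = x" "xi s \<bullet> N = y"
    unfolding xi by (simp_all add: inner_add_left)
  with assms(1-3) \<open>N \<bullet> T = 0\<close> show ?thesis
    unfolding fK3_R_def fK3_sectional_def
    by (simp add: xi vec_eq_iff algebra_simps power2_eq_square)
qed

lemma tension3_constant_curvature:
  fixes T N :: "real \<Rightarrow> vec3"
  assumes "open I"
    and T': "\<And>s. s \<in> I \<Longrightarrow> (T has_vector_derivative k *\<^sub>R N s) (at s)"
    and N': "\<And>s. s \<in> I \<Longrightarrow> (N has_vector_derivative - k *\<^sub>R T s) (at s)"
    and "s \<in> I" "T s \<bullet> T s = 1" "N s \<bullet> N s = 1" "T s \<bullet> N s = 0"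
    and "xi s = x *\<^sub>R T s + y *\<^sub>R N s"
  shows "cov_iter 5 T s + fK3_R r f fd xi s (cov_iter 3 T s) (T s) (T s)
           - fK3_R r f fd xi s (cov_iter 2 T s) (cov_iter 1 T s) (T s)
         = (k ^ 3 * (k\<^sup>2 - 2 * fK3_sectional r f fd xi s (T s) (N s))) *\<^sub>R N s"
proof -
  have cov_iter: "cov_iter (2 * n) T s = (-(k\<^sup>2)) ^ n *\<^sub>R T s
      \<and> cov_iter (2 * n + 1) T s = (k * (-(k\<^sup>2)) ^ n) *\<^sub>R N s" for n
    using cov_iter_constant_curvature[of I T k N n] assms(1-4) by blast
  have cov: "cov_iter 1 T s = k *\<^sub>R N s" "cov_iter 2 T s = - (k\<^sup>2) *\<^sub>R T s"
    "cov_iter 3 T s = - (k ^ 3) *\<^sub>R N s" "cov_iter 5 T s = k ^ 5 *\<^sub>R N s"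
    using cov_iter[of 0] cov_iter[of 1] cov_iter[of 2]
    by (simp_all add: power2_eq_square eval_nat_numeral)
  have plane: "fK3_R r f fd xi s (N s) (T s) (T s) = fK3_sectional r f fd xi s (T s) (N s) *\<^sub>R N s"
    using assms(5-8) by (rule fK3_R_orthonormal_plane)
  show ?thesis
    unfolding cov fK3_R_scaleR_left fK3_R_scaleR_middle fK3_R_swap[of _ _ _ _ _ "T s" "N s"] plane
    by (simp add: vec_eq_iff algebra_simps power2_eq_square eval_nat_numeral)
qed

lemma pos_eq_real_sqrt_iff:
  fixes k c :: real
  assumes "0 < k"
  shows "k = sqrt c \<longleftrightarrow> k\<^sup>2 = c"
  using assms by (metis less_eq_real_def real_sqrt_gt_0_iff real_sqrt_pow2 real_sqrt_unique)

lemma frenet3_planar_derivatives: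
  assumes "frenet3 I T N B (\<lambda>_. k) (\<lambda>_. 0)" "s \<in> I"
  shows "(T has_vector_derivative k *\<^sub>R N s) (at s)"
    and "(N has_vector_derivative - k *\<^sub>R T s) (at s)"
  using assms by (auto simp: frenet3_def)

lemma triharmonic_constant_curvature_iff:
  assumes "open I" "frenet3 I T N B (\<lambda>_. k) (\<lambda>_. 0)" "k \<noteq> 0"
    and "\<forall>s\<in>I. xi s \<bullet> B s = 0"
  shows "triharmonic I (fK3_R r f fd xi) T \<longleftrightarrow>
    (\<forall>s\<in>I. k\<^sup>2 = 2 * fK3_sectional r f fd xi s (T s) (N s))"
proof -
  have "cov_iter 5 T s + fK3_R r f fd xi s (cov_iter 3 T s) (T s) (T s)
          - fK3_R r f fd xi s (cov_iter 2 T s) (cov_iter 1 T s) (T s) = 0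
        \<longleftrightarrow> k\<^sup>2 = 2 * fK3_sectional r f fd xi s (T s) (N s)" if "s \<in> I" for s
  proof -
    note frame = assms(2)[unfolded frenet3_def, rule_format, OF that]
    have "xi s = (xi s \<bullet> T s) *\<^sub>R T s + (xi s \<bullet> N s) *\<^sub>R N s"
      using orthonormal_triple_expansion[of "T s" "N s" "B s" "xi s"] frame assms(4) that by simp
    moreover have "N s \<noteq> 0"
      using frame by auto
    ultimately show ?thesis
      using tension3_constant_curvature[OF assms(1) frenet3_planar_derivatives[OF assms(2)] that]
        frame \<open>k \<noteq> 0\<close>
      by simp
  qed
  then show ?thesis
    unfolding triharmonic_def by blast
qed

lemma frenet3_not_geodesic:
  assumes "open I" "I \<noteq> {}" "frenet3 I T N B (\<lambda>_. k) (\<lambda>_. 0)" "k \<noteq> 0"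
  shows "\<not> geodesic_along I T"
proof
  assume "geodesic_along I T"
  moreover obtain s where "s \<in> I"
    using assms(2) by blast
  ultimately have "k *\<^sub>R N s = 0"
    using cov_iter_constant_curvature[of I T k N 0] assms(1) frenet3_planar_derivatives[OF assms(3)]
    by (auto simp: geodesic_along_def)
  with \<open>s \<in> I\<close> assms(3,4) show False
    by (auto simp: frenet3_def)
qed

theorem theorem4:
  fixes I :: "real set"
    and T N B xi :: "real \<Rightarrow> real^3"
    and phi :: "real \<Rightarrow> real^3 \<Rightarrow> real^3"
    and f fd r :: "real \<Rightarrow> real"
    and k1 :: real
  assumes "open I" and "is_interval I" and "I \<noteq> {}"
    and "fKenmotsu_along I phi xi f fd T"
    and "frenet3 I T N B (\<lambda>_. k1) (\<lambda>_. 0)"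
    and "k1 > 0"
    and "\<forall>s\<in>I. xi s \<bullet> B s = 0"
  shows "proper_triharmonic I (fK3_R r f fd xi) T \<longleftrightarrow>
    (\<forall>s\<in>I. k1 = sqrt (2 * (r s / 2 + 2 * ((f s)\<^sup>2 + fd s)
        - (r s / 2 + 3 * ((f s)\<^sup>2 + fd s)) * ((xi s \<bullet> T s)\<^sup>2 + (xi s \<bullet> N s)\<^sup>2))))"
proof -
  have "k1 \<noteq> 0"
    using \<open>k1 > 0\<close> by simp
  then show ?thesis
    unfolding proper_triharmonic_def
      triharmonic_constant_curvature_iff[OF assms(1,5) \<open>k1 \<noteq> 0\<close> assms(7)]
      pos_eq_real_sqrt_iff[OF \<open>k1 > 0\<close>] fK3_sectional_def
    using frenet3_not_geodesic[OF assms(1,3,5) \<open>k1 \<noteq> 0\<close>] by blast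
qed

end
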